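(* The collection $\mathbf{FinCorel}^\circ$ of corelations is closed under composition and tensor in $\mathbf{FinCorel}$ and contains all identities and symmetries; hence $\mathbf{FinCorel}^\circ$ is a sub-PROP of $\mathbf{FinCorel}$.
   Context: A PROP is a strict symmetric monoidal category whose monoid of objects is $(\mathbb{N},+,0)$. Write $\underline{m}=\{1,\dots,m\}$. $\mathbf{FinCorel}$ is the PROP whose morphisms $m\to n$ are equivalence relations on $\underline{m}\sqcup\underline{n}$; the composite of $R:m\to n$ and $S:n\to p$ is the restriction to $\underline{m}\sqcup\underline{p}$ of the equivalence relation generated by $R\cup S$ on $\underline{m}\sqcup\underline{n}\sqcup\underline{p}$; tensor is disjoint union with reindexing by addition; the identity at $n$ identifies each input $i$ with output $i$; symmetries are transposition corelations. $\mathbf{FinCorel}^\circ$ consists of those corelations $R:m\to n$ such that (a) every equivalence class of $R$ contains exactly one element of $\underline{m}$ and (b) every equivalence class contains at least one element of $\underline{n}$. *)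

theory Defs
  imports Main
begin

text \<open>Points of the disjoint union m + n: Inl i (input i, 1 <= i <= m) and
  Inr j (output j, 1 <= j <= n).\<close>

type_synonym point = "nat + nat"
type_synonym corel = "(point \<times> point) set"

definition pts :: "nat \<Rightarrow> nat \<Rightarrow> point set" where
  "pts m n = Inl ` {1..m} \<union> Inr ` {1..n}"

definition is_corel :: "nat \<Rightarrow> nat \<Rightarrow> corel \<Rightarrow> bool" where
  "is_corel m n R \<longleftrightarrow> equiv (pts m n) R"

text \<open>Equivalence relation generated by X on the set A (X assumed inside A x A).\<close>
definition gen_equiv :: "'a set \<Rightarrow> ('a \<times> 'a) set \<Rightarrow> ('a \<times> 'a) set" where
  "gen_equiv A X = (X \<union> X\<inverse> \<union> Id_on A)\<^sup>* \<inter> (A \<times> A)"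

text \<open>Points of m + n + p are encoded as pairs (0,i), (1,j), (2,k).\<close>
fun emb_left :: "point \<Rightarrow> nat \<times> nat" where
  "emb_left (Inl i) = (0, i)" | "emb_left (Inr j) = (1, j)"

fun emb_right :: "point \<Rightarrow> nat \<times> nat" where
  "emb_right (Inl j) = (1, j)" | "emb_right (Inr k) = (2, k)"

fun emb_outer :: "point \<Rightarrow> nat \<times> nat" where
  "emb_outer (Inl i) = (0, i)" | "emb_outer (Inr k) = (2, k)"

definition pts3 :: "nat \<Rightarrow> nat \<Rightarrow> nat \<Rightarrow> (nat \<times> nat) set" where
  "pts3 m n p = {0} \<times> {1..m} \<union> {1} \<times> {1..n} \<union> {2} \<times> {1..p}"

definition corel_comp :: "nat \<Rightarrow> nat \<Rightarrow> nat \<Rightarrow> corel \<Rightarrow> corel \<Rightarrow> corel" where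
  "corel_comp m n p R S =
     {(x, y). x \<in> pts m p \<and> y \<in> pts m p \<and>
        (emb_outer x, emb_outer y) \<in>
          gen_equiv (pts3 m n p)
            ((\<lambda>(a, b). (emb_left a, emb_left b)) ` R \<union>
             (\<lambda>(a, b). (emb_right a, emb_right b)) ` S)}"

fun shift :: "nat \<Rightarrow> nat \<Rightarrow> point \<Rightarrow> point" where
  "shift m n (Inl i) = Inl (i + m)" | "shift m n (Inr j) = Inr (j + n)"

definition corel_tensor :: "nat \<Rightarrow> nat \<Rightarrow> corel \<Rightarrow> corel \<Rightarrow> corel" where
  "corel_tensor m n R S = R \<union> (\<lambda>(a, b). (shift m n a, shift m n b)) ` S"

fun idx :: "point \<Rightarrow> nat" where
  "idx (Inl i) = i" | "idx (Inr j) = j"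

definition corel_id :: "nat \<Rightarrow> corel" where
  "corel_id n = {(x, y). x \<in> pts n n \<and> y \<in> pts n n \<and> idx x = idx y}"

text \<open>Symmetry (braiding) corelation m + n -> n + m: input i <= m is joined with
  output n + i, input m + j is joined with output j.\<close>
fun sym_tgt :: "nat \<Rightarrow> nat \<Rightarrow> point \<Rightarrow> point" where
  "sym_tgt m n (Inl i) = (if i \<le> m then Inr (n + i) else Inr (i - m))"
| "sym_tgt m n (Inr j) = Inr j"

definition corel_sym :: "nat \<Rightarrow> nat \<Rightarrow> corel" where
  "corel_sym m n = {(x, y). x \<in> pts (m + n) (n + m) \<and> y \<in> pts (m + n) (n + m) \<and>
                        sym_tgt m n x = sym_tgt m n y}"

definition in_FinCorel_circ :: "nat \<Rightarrow> nat \<Rightarrow> corel \<Rightarrow> bool" where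
  "in_FinCorel_circ m n R \<longleftrightarrow> is_corel m n R \<and>
     (\<forall>C \<in> pts m n // R. card (C \<inter> Inl ` {1..m}) = 1 \<and> C \<inter> Inr ` {1..n} \<noteq> {})"

end

theory Submission
  imports Defs
begin

(* A corelation m -> n lies in FinCorel^circ iff it is the kernel of the map [id, g] : m + n -> m
   for a surjection g : n -> m, which joins output j to input g j.  On the glued points
   m + n + p, the equivalence generated by the kernels of [id, g] and [id, h] is the kernel of
   the labelling i, g j, g (h k) of the three parts, so the composite is the kernel of
   [id, g o h]; likewise the tensor is the kernel of [id, g + h].  Composites and sums of
   surjections are surjections.  Identities and symmetries are kernels of maps that are
   injective on the inputs and take the same values on inputs and outputs. *)

definition ker_on :: "'a set \<Rightarrow> ('a \<Rightarrow> 'b) \<Rightarrow> ('a \<times> 'a) set" where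
  "ker_on P f = {(x, y). x \<in> P \<and> y \<in> P \<and> f x = f y}"

lemma equiv_ker_on: "equiv P (ker_on P f)"
  unfolding ker_on_def equiv_def refl_on_def sym_def trans_def by auto

lemma ker_on_cong:
  "(\<And>x. x \<in> P \<Longrightarrow> f x = g x) \<Longrightarrow> ker_on P f = ker_on P g"
  unfolding ker_on_def by auto

lemma ker_on_inj_comp: "inj \<phi> \<Longrightarrow> ker_on P (\<phi> \<circ> f) = ker_on P f"
  unfolding ker_on_def by (auto dest: injD)

lemma ker_on_Un_disjoint:
  "f ` P \<inter> f ` Q = {} \<Longrightarrow> ker_on (P \<union> Q) f = ker_on P f \<union> ker_on Q f"
  unfolding ker_on_def by blast

lemma ker_on_image:
  "ker_on (\<sigma> ` Q) f = (\<lambda>(a, b). (\<sigma> a, \<sigma> b)) ` ker_on Q (f \<circ> \<sigma>)"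
  unfolding ker_on_def by fastforce

lemma equiv_eq_ker_onI:
  assumes "equiv P R"
    and "\<And>x. x \<in> P \<Longrightarrow> (x, s (f x)) \<in> R"
    and "\<And>x y. (x, y) \<in> R \<Longrightarrow> f x = f y"
  shows "R = ker_on P f"
proof (intro set_eqI iffI; clarify)
  fix x y
  assume "(x, y) \<in> R"
  with assms show "(x, y) \<in> ker_on P f"
    unfolding ker_on_def equiv_def refl_on_def by blast
next
  fix x y
  assume "(x, y) \<in> ker_on P f"
  then have "x \<in> P" "y \<in> P" "f x = f y"
    unfolding ker_on_def by auto
  then have "(x, s (f x)) \<in> R" "(y, s (f x)) \<in> R"
    using assms(2) by metis+
  with \<open>equiv P R\<close> show "(x, y) \<in> R"
    unfolding equiv_def by (meson symD transD)
qed

lemma equiv_gen_equiv: "equiv A (gen_equiv A X)"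
proof (rule equivI)
  show "gen_equiv A X \<subseteq> A \<times> A"
    unfolding gen_equiv_def by blast
  show "refl_on A (gen_equiv A X)"
    unfolding gen_equiv_def refl_on_def by auto
  show "sym (gen_equiv A X)"
    unfolding gen_equiv_def
    by (intro sym_Int sym_rtrancl sym_Un sym_Un_converse sym_Id_on) (auto intro: symI)
  show "trans (gen_equiv A X)"
    unfolding gen_equiv_def by (intro trans_Int trans_rtrancl) (auto intro: transI)
qed

lemma subset_gen_equiv: "X \<subseteq> A \<times> A \<Longrightarrow> X \<subseteq> gen_equiv A X"
  unfolding gen_equiv_def by auto

lemma gen_equiv_eq_ker_onI:
  assumes "X \<subseteq> ker_on A f"
    and "\<And>a. a \<in> A \<Longrightarrow> (a, s (f a)) \<in> gen_equiv A X"
  shows "gen_equiv A X = ker_on A f"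
proof (rule equiv_eq_ker_onI)
  show "equiv A (gen_equiv A X)"
    by (rule equiv_gen_equiv)
  show "(a, s (f a)) \<in> gen_equiv A X" if "a \<in> A" for a
    using that by (rule assms(2))
  fix x y
  assume "(x, y) \<in> gen_equiv A X"
  then have "(x, y) \<in> (X \<union> X\<inverse> \<union> Id_on A)\<^sup>*"
    unfolding gen_equiv_def by blast
  then show "f x = f y"
    by induction (use assms(1) in \<open>auto simp: ker_on_def\<close>)
qed

lemma in_FinCorel_circ_ker_onI:
  assumes inj: "inj_on f (Inl ` {1..m})"
    and im: "f ` Inr ` {1..n} = f ` Inl ` {1..m}"
  shows "in_FinCorel_circ m n (ker_on (pts m n) f)"
  unfolding in_FinCorel_circ_def is_corel_def
proof (intro conjI ballI equiv_ker_on)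
  fix C
  assume "C \<in> pts m n // ker_on (pts m n) f"
  then obtain x where x: "x \<in> pts m n" and "C = ker_on (pts m n) f `` {x}"
    by (rule quotientE)
  then have C: "C = {y \<in> pts m n. f y = f x}"
    unfolding ker_on_def by auto
  have "f ` pts m n = f ` Inl ` {1..m}"
    using im unfolding pts_def by (simp add: image_Un)
  with x have fx: "f x \<in> f ` Inl ` {1..m}"
    by (metis imageI)
  then obtain i where i: "i \<in> {1..m}" "f x = f (Inl i)"
    unfolding image_image by (rule imageE)
  from fx have "f x \<in> f ` Inr ` {1..n}"
    unfolding im .
  then obtain j where j: "j \<in> {1..n}" "f x = f (Inr j)"
    unfolding image_image by (rule imageE)
  have "C \<inter> Inl ` {1..m} = {Inl i}"
  proof
    show "{Inl i} \<subseteq> C \<inter> Inl ` {1..m}"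
      using i unfolding C pts_def by auto
    show "C \<inter> Inl ` {1..m} \<subseteq> {Inl i}"
      using i inj unfolding C by (auto dest: inj_onD)
  qed
  then show "card (C \<inter> Inl ` {1..m}) = 1"
    by simp
  have "Inr j \<in> C \<inter> Inr ` {1..n}"
    using j unfolding C pts_def by auto
  then show "C \<inter> Inr ` {1..n} \<noteq> {}"
    by blast
qed

lemma in_FinCorel_circ_ker_on_case_sum:
  assumes "g ` {1..n} = {1..m}"
  shows "in_FinCorel_circ m n (ker_on (pts m n) (case_sum id g))"
proof (rule in_FinCorel_circ_ker_onI)
  show "inj_on (case_sum id g) (Inl ` {1..m})"
    by (simp add: inj_on_def)
  show "case_sum id g ` Inr ` {1..n} = case_sum id g ` Inl ` {1..m}"
    using assms by (simp add: image_image)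
qed

lemma in_FinCorel_circ_equiv: "in_FinCorel_circ m n R \<Longrightarrow> equiv (pts m n) R"
  unfolding in_FinCorel_circ_def is_corel_def by blast

lemma in_FinCorel_circ_unique_input:
  assumes circ: "in_FinCorel_circ m n R" and x: "x \<in> pts m n"
  shows "\<exists>!i. i \<in> {1..m} \<and> (x, Inl i) \<in> R"
proof -
  have "R `` {x} \<in> pts m n // R"
    using x by (rule quotientI)
  with circ have "card (R `` {x} \<inter> Inl ` {1..m}) = 1"
    unfolding in_FinCorel_circ_def by blast
  then obtain a where a: "R `` {x} \<inter> Inl ` {1..m} = {a}"
    by (rule card_1_singletonE)
  then have "a \<in> Inl ` {1..m}" "(x, a) \<in> R"
    by auto
  then obtain i where i: "i \<in> {1..m}" "(x, Inl i) \<in> R" and "a = Inl i"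
    by auto
  moreover have "i' = i" if "i' \<in> {1..m}" "(x, Inl i') \<in> R" for i'
  proof -
    have "Inl i' \<in> R `` {x} \<inter> Inl ` {1..m}"
      using that by blast
    with a \<open>a = Inl i\<close> show "i' = i"
      by simp
  qed
  ultimately show ?thesis
    by blast
qed

definition input_of :: "nat \<Rightarrow> corel \<Rightarrow> point \<Rightarrow> nat" where
  "input_of m R x = (THE i. i \<in> {1..m} \<and> (x, Inl i) \<in> R)"

context
  fixes m n R
  assumes circ: "in_FinCorel_circ m n R"
begin

lemma input_of_spec:
  "x \<in> pts m n \<Longrightarrow> input_of m R x \<in> {1..m} \<and> (x, Inl (input_of m R x)) \<in> R"
  unfolding input_of_def by (rule theI'[OF in_FinCorel_circ_unique_input[OF circ]])

lemma input_of_eqI: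
  "x \<in> pts m n \<Longrightarrow> i \<in> {1..m} \<Longrightarrow> (x, Inl i) \<in> R \<Longrightarrow> input_of m R x = i"
  unfolding input_of_def
  by (blast intro: the1_equality[OF in_FinCorel_circ_unique_input[OF circ]])

lemma input_of_Inl:
  assumes "i \<in> {1..m}"
  shows "input_of m R (Inl i) = i"
proof (rule input_of_eqI)
  show "Inl i \<in> pts m n"
    using assms by (simp add: pts_def)
  with in_FinCorel_circ_equiv[OF circ] show "(Inl i, Inl i) \<in> R"
    by (blast elim: equivE dest: refl_onD)
qed (rule assms)

lemma eq_ker_on_input_of: "R = ker_on (pts m n) (input_of m R)"
proof (rule equiv_eq_ker_onI[where s = Inl])
  show equiv: "equiv (pts m n) R"
    using circ by (rule in_FinCorel_circ_equiv)
  show "(x, Inl (input_of m R x)) \<in> R" if "x \<in> pts m n" for x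
    using input_of_spec[OF that] ..
  show "input_of m R x = input_of m R y" if "(x, y) \<in> R" for x y
  proof -
    have "x \<in> pts m n" "y \<in> pts m n"
      using equiv that by (auto elim: equivE)
    with equiv that input_of_spec[of y] show ?thesis
      by (blast intro: input_of_eqI elim: equivE dest: transD)
  qed
qed

lemma input_of_Inr_image: "(\<lambda>j. input_of m R (Inr j)) ` {1..n} = {1..m}"
proof
  show "(\<lambda>j. input_of m R (Inr j)) ` {1..n} \<subseteq> {1..m}"
    using input_of_spec by (auto simp: pts_def)
  show "{1..m} \<subseteq> (\<lambda>j. input_of m R (Inr j)) ` {1..n}"
  proof
    fix i
    assume i: "i \<in> {1..m}"
    then have "R `` {Inl i} \<in> pts m n // R"
      by (intro quotientI) (simp add: pts_def)
    with circ obtain j where j: "j \<in> {1..n}" "(Inl i, Inr j) \<in> R"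
      unfolding in_FinCorel_circ_def by blast
    with in_FinCorel_circ_equiv[OF circ] have "(Inr j, Inl i) \<in> R"
      by (blast elim: equivE dest: symD)
    with i j have "input_of m R (Inr j) = i"
      by (intro input_of_eqI) (simp_all add: pts_def)
    with j show "i \<in> (\<lambda>j. input_of m R (Inr j)) ` {1..n}"
      by blast
  qed
qed

lemma in_FinCorel_circE:
  obtains g where "g ` {1..n} = {1..m}" and "R = ker_on (pts m n) (case_sum id g)"
proof
  show "(\<lambda>j. input_of m R (Inr j)) ` {1..n} = {1..m}"
    by (rule input_of_Inr_image)
  have "R = ker_on (pts m n) (input_of m R)"
    by (rule eq_ker_on_input_of)
  also have "\<dots> = ker_on (pts m n) (case_sum id (\<lambda>j. input_of m R (Inr j)))"
    by (rule ker_on_cong) (auto simp: pts_def input_of_Inl)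
  finally show "R = ker_on (pts m n) (case_sum id (\<lambda>j. input_of m R (Inr j)))" .
qed

end

lemma emb_left_in_pts3: "a \<in> pts m n \<Longrightarrow> emb_left a \<in> pts3 m n p"
  by (cases a) (auto simp: pts_def pts3_def)

lemma emb_right_in_pts3: "b \<in> pts n p \<Longrightarrow> emb_right b \<in> pts3 m n p"
  by (cases b) (auto simp: pts_def pts3_def)

lemma emb_outer_in_pts3: "x \<in> pts m p \<Longrightarrow> emb_outer x \<in> pts3 m n p"
  by (cases x) (auto simp: pts_def pts3_def)

definition comp_label :: "(nat \<Rightarrow> nat) \<Rightarrow> (nat \<Rightarrow> nat) \<Rightarrow> nat \<times> nat \<Rightarrow> nat" where
  "comp_label g h = (\<lambda>(c, i). if c = 0 then i else if c = 1 then g i else g (h i))"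

lemma comp_label_emb_left: "comp_label g h (emb_left a) = case_sum id g a"
  by (cases a) (simp_all add: comp_label_def)

lemma comp_label_emb_right: "comp_label g h (emb_right b) = g (case_sum id h b)"
  by (cases b) (simp_all add: comp_label_def)

lemma comp_label_emb_outer: "comp_label g h (emb_outer x) = case_sum id (g \<circ> h) x"
  by (cases x) (simp_all add: comp_label_def)

lemma gen_equiv_comp_ker_on_case_sum:
  fixes m n p :: nat and g h :: "nat \<Rightarrow> nat"
  defines "X \<equiv> (\<lambda>(a, b). (emb_left a, emb_left b)) ` ker_on (pts m n) (case_sum id g) \<union>
      (\<lambda>(a, b). (emb_right a, emb_right b)) ` ker_on (pts n p) (case_sum id h)"
  assumes g: "g ` {1..n} \<subseteq> {1..m}" and h: "h ` {1..p} \<subseteq> {1..n}"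
  shows "gen_equiv (pts3 m n p) X = ker_on (pts3 m n p) (comp_label g h)"
proof (rule gen_equiv_eq_ker_onI[where s = "\<lambda>i. (0, i)"])
  let ?A = "pts3 m n p" and ?G = "gen_equiv (pts3 m n p) X"
  show X_ker: "X \<subseteq> ker_on ?A (comp_label g h)"
    unfolding X_def ker_on_def
    by (auto simp: comp_label_emb_left comp_label_emb_right emb_left_in_pts3 emb_right_in_pts3)
  have refl: "refl_on ?A ?G" and sym: "sym ?G" and trans: "trans ?G"
    using equiv_gen_equiv[of ?A X] by (simp_all add: equiv_def)
  have X_G: "X \<subseteq> ?G"
    using X_ker by (intro subset_gen_equiv) (auto simp: ker_on_def)
  have middle: "((1, j), (0, g j)) \<in> ?G" if j: "j \<in> {1..n}" for j
  proof -
    from g j have "g j \<in> {1..m}"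
      by blast
    with j have "(Inl (g j), Inr j) \<in> ker_on (pts m n) (case_sum id g)"
      by (simp add: ker_on_def pts_def)
    then have "((0, g j), (1, j)) \<in> X"
      unfolding X_def by force
    with X_G sym show ?thesis
      by (blast dest: symD)
  qed
  have right: "((2, k), (1, h k)) \<in> ?G" if k: "k \<in> {1..p}" for k
  proof -
    from h k have "h k \<in> {1..n}"
      by blast
    with k have "(Inl (h k), Inr k) \<in> ker_on (pts n p) (case_sum id h)"
      by (simp add: ker_on_def pts_def)
    then have "((1, h k), (2, k)) \<in> X"
      unfolding X_def by force
    with X_G sym show ?thesis
      by (blast dest: symD)
  qed
  fix a
  assume "a \<in> ?A"
  then consider i where "a = (0, i)" | j where "a = (1, j)" "j \<in> {1..n}"
    | k where "a = (2, k)" "k \<in> {1..p}"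
    unfolding pts3_def by auto
  then show "(a, (0, comp_label g h a)) \<in> ?G"
  proof cases
    case 1
    with \<open>a \<in> ?A\<close> refl show ?thesis
      by (simp add: comp_label_def refl_onD)
  next
    case 2
    with middle show ?thesis
      by (simp add: comp_label_def)
  next
    case 3
    with h have "h k \<in> {1..n}"
      by blast
    with 3 right middle[of "h k"] trans show ?thesis
      by (simp add: comp_label_def) (blast dest: transD)
  qed
qed

lemma corel_comp_ker_on_case_sum:
  assumes "g ` {1..n} \<subseteq> {1..m}" and "h ` {1..p} \<subseteq> {1..n}"
  shows "corel_comp m n p (ker_on (pts m n) (case_sum id g)) (ker_on (pts n p) (case_sum id h))
           = ker_on (pts m p) (case_sum id (g \<circ> h))"
  unfolding corel_comp_def gen_equiv_comp_ker_on_case_sum[OF assms]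
  by (auto simp: ker_on_def comp_label_emb_outer emb_outer_in_pts3)

lemma in_FinCorel_circ_comp:
  assumes "in_FinCorel_circ m n R" and "in_FinCorel_circ n p S"
  shows "in_FinCorel_circ m p (corel_comp m n p R S)"
proof -
  obtain g where g: "g ` {1..n} = {1..m}" and R: "R = ker_on (pts m n) (case_sum id g)"
    using assms(1) by (rule in_FinCorel_circE)
  obtain h where h: "h ` {1..p} = {1..n}" and S: "S = ker_on (pts n p) (case_sum id h)"
    using assms(2) by (rule in_FinCorel_circE)
  have "corel_comp m n p R S = ker_on (pts m p) (case_sum id (g \<circ> h))"
    unfolding R S using g h by (intro corel_comp_ker_on_case_sum) simp_all
  moreover have "(g \<circ> h) ` {1..p} = {1..m}"
    by (simp only: image_comp[symmetric] g h)
  ultimately show ?thesis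
    by (simp add: in_FinCorel_circ_ker_on_case_sum)
qed

lemma atLeastAtMost_add_split: "{1..n + n'} = {1..n} \<union> (\<lambda>j. j + n) ` {1..n'}" for n n' :: nat
  by auto

lemma pts_add: "pts (m + m') (n + n') = pts m n \<union> shift m n ` pts m' n'"
proof
  show "pts (m + m') (n + n') \<subseteq> pts m n \<union> shift m n ` pts m' n'"
  proof
    fix x
    assume x: "x \<in> pts (m + m') (n + n')"
    show "x \<in> pts m n \<union> shift m n ` pts m' n'"
    proof (cases "x \<in> pts m n")
      case False
      with x have "x = shift m n (case_sum (\<lambda>i. Inl (i - m)) (\<lambda>j. Inr (j - n)) x)"
        "case_sum (\<lambda>i. Inl (i - m)) (\<lambda>j. Inr (j - n)) x \<in> pts m' n'"
        by (cases x; auto simp: pts_def image_iff)+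
      then show ?thesis
        by blast
    qed simp
  qed
  show "pts m n \<union> shift m n ` pts m' n' \<subseteq> pts (m + m') (n + n')"
    by (auto simp: pts_def)
qed

definition fun_sum :: "nat \<Rightarrow> nat \<Rightarrow> (nat \<Rightarrow> nat) \<Rightarrow> (nat \<Rightarrow> nat) \<Rightarrow> nat \<Rightarrow> nat" where
  "fun_sum n m g h j = (if j \<le> n then g j else h (j - n) + m)"

lemma fun_sum_image:
  assumes "g ` {1..n} = {1..m}" and "h ` {1..n'} = {1..m'}"
  shows "fun_sum n m g h ` {1..n + n'} = {1..m + m'}"
proof -
  have "fun_sum n m g h ` {1..n} = g ` {1..n}"
    by (rule image_cong) (simp_all add: fun_sum_def)
  moreover have "fun_sum n m g h ` (\<lambda>j. j + n) ` {1..n'} = (\<lambda>i. i + m) ` h ` {1..n'}"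
    unfolding image_image by (rule image_cong) (simp_all add: fun_sum_def)
  ultimately show ?thesis
    unfolding atLeastAtMost_add_split image_Un assms by simp
qed

lemma corel_tensor_ker_on_case_sum:
  assumes g: "g ` {1..n} \<subseteq> {1..m}" and h: "h ` {1..n'} \<subseteq> {1..m'}"
  shows "corel_tensor m n (ker_on (pts m n) (case_sum id g)) (ker_on (pts m' n') (case_sum id h))
           = ker_on (pts (m + m') (n + n')) (case_sum id (fun_sum n m g h))"
    (is "_ = ker_on _ ?f")
proof -
  have f_left: "?f x = case_sum id g x" if "x \<in> pts m n" for x
    using that by (cases x) (auto simp: pts_def fun_sum_def)
  have f_right: "?f (shift m n a) = case_sum id h a + m" if "a \<in> pts m' n'" for a
    using that by (cases a) (auto simp: pts_def fun_sum_def)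
  have "?f x \<le> m" if "x \<in> pts m n" for x
    using that g by (cases x) (auto simp: pts_def fun_sum_def)
  moreover have "?f (shift m n a) > m" if "a \<in> pts m' n'" for a
    using that h by (cases a) (auto simp: pts_def fun_sum_def)
  ultimately have disjoint: "?f ` pts m n \<inter> ?f ` shift m n ` pts m' n' = {}"
    by (fastforce simp: disjoint_iff)
  have "ker_on (pts (m + m') (n + n')) ?f
      = ker_on (pts m n) ?f \<union> ker_on (shift m n ` pts m' n') ?f"
    unfolding pts_add using disjoint by (rule ker_on_Un_disjoint)
  also have "ker_on (pts m n) ?f = ker_on (pts m n) (case_sum id g)"
    using f_left by (rule ker_on_cong)
  also have "ker_on (shift m n ` pts m' n') ?f
      = (\<lambda>(a, b). (shift m n a, shift m n b)) ` ker_on (pts m' n') (?f \<circ> shift m n)"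
    by (rule ker_on_image)
  also have "ker_on (pts m' n') (?f \<circ> shift m n)
      = ker_on (pts m' n') ((\<lambda>i. i + m) \<circ> case_sum id h)"
    by (rule ker_on_cong) (simp add: f_right)
  also have "\<dots> = ker_on (pts m' n') (case_sum id h)"
    by (rule ker_on_inj_comp) (simp add: inj_def)
  finally show ?thesis
    unfolding corel_tensor_def ..
qed

lemma in_FinCorel_circ_tensor:
  assumes "in_FinCorel_circ m n R" and "in_FinCorel_circ m' n' S"
  shows "in_FinCorel_circ (m + m') (n + n') (corel_tensor m n R S)"
proof -
  obtain g where g: "g ` {1..n} = {1..m}" and R: "R = ker_on (pts m n) (case_sum id g)"
    using assms(1) by (rule in_FinCorel_circE)
  obtain h where h: "h ` {1..n'} = {1..m'}" and S: "S = ker_on (pts m' n') (case_sum id h)"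
    using assms(2) by (rule in_FinCorel_circE)
  have "corel_tensor m n R S = ker_on (pts (m + m') (n + n')) (case_sum id (fun_sum n m g h))"
    unfolding R S using g h by (intro corel_tensor_ker_on_case_sum) simp_all
  moreover have "fun_sum n m g h ` {1..n + n'} = {1..m + m'}"
    using g h by (rule fun_sum_image)
  ultimately show ?thesis
    by (simp add: in_FinCorel_circ_ker_on_case_sum)
qed

lemma in_FinCorel_circ_id: "in_FinCorel_circ n n (corel_id n)"
proof -
  have "inj_on idx (Inl ` {1..n})"
    by (auto simp: inj_on_def)
  moreover have "idx ` Inr ` {1..n} = idx ` Inl ` {1..n}"
    by (simp add: image_image)
  ultimately have "in_FinCorel_circ n n (ker_on (pts n n) idx)"
    by (rule in_FinCorel_circ_ker_onI)
  moreover have "corel_id n = ker_on (pts n n) idx"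
    unfolding corel_id_def ker_on_def ..
  ultimately show ?thesis
    by simp
qed

lemma in_FinCorel_circ_sym: "in_FinCorel_circ (m + n) (n + m) (corel_sym m n)"
proof -
  let ?s = "sym_tgt m n"
  have inj: "inj_on ?s (Inl ` {1..m + n})"
    by (auto simp: inj_on_def)
  have low: "?s ` Inl ` {1..m} = Inr ` (\<lambda>i. i + n) ` {1..m}"
    unfolding image_image by (rule image_cong) auto
  have high: "?s ` Inl ` (\<lambda>j. j + m) ` {1..n} = Inr ` {1..n}"
    unfolding image_image by (rule image_cong) auto
  have "?s ` Inr ` {1..n + m} = Inr ` {1..n + m}"
    by (simp add: image_image)
  also have "\<dots> = ?s ` Inl ` {1..m + n}"
    unfolding atLeastAtMost_add_split image_Un low high by (rule Un_commute)
  finally have "in_FinCorel_circ (m + n) (n + m) (ker_on (pts (m + n) (n + m)) ?s)"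
    using inj by (intro in_FinCorel_circ_ker_onI)
  moreover have "corel_sym m n = ker_on (pts (m + n) (n + m)) ?s"
    unfolding corel_sym_def ker_on_def ..
  ultimately show ?thesis
    by simp
qed

theorem proposition2p12:
  shows "(\<forall>m n p R S. in_FinCorel_circ m n R \<and> in_FinCorel_circ n p S \<longrightarrow>
            in_FinCorel_circ m p (corel_comp m n p R S))
       \<and> (\<forall>m n m' n' R S. in_FinCorel_circ m n R \<and> in_FinCorel_circ m' n' S \<longrightarrow>
            in_FinCorel_circ (m + m') (n + n') (corel_tensor m n R S))
       \<and> (\<forall>n. in_FinCorel_circ n n (corel_id n))
       \<and> (\<forall>m n. in_FinCorel_circ (m + n) (n + m) (corel_sym m n))"
  using in_FinCorel_circ_comp in_FinCorel_circ_tensor in_FinCorel_circ_id in_FinCorel_circ_sym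
  by blast

end
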